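(* Let $p_n=3n$ and $\mathcal D_n=\{0,2,3n^2+1\}$ for all $n\ge1$. Then the Cantor-Moran measure $\mu_{\{p_n,\mathcal D_n\}}=\delta_{p_1^{-1}\mathcal D_1}*\delta_{(p_1p_2)^{-1}\mathcal D_2}*\cdots$ (for which $\sup_n\max\{p_n^{-1}d:d\in\mathcal D_n\}=\infty$) is a spectral measure.
   Context: For finite $A\subset\mathbb R$, $\delta_A=\frac{1}{\#A}\sum_{a\in A}\delta_a$. The Cantor-Moran measure $\mu_{\{p_n,\mathcal D_n\}}$ is the weak limit of $\delta_{p_1^{-1}\mathcal D_1}*\cdots*\delta_{(p_1\cdots p_n)^{-1}\mathcal D_n}$. A probability measure $\mu$ is spectral if there is a countable $\Lambda\subset\mathbb R$ with $\{e^{2\pi i\lambda x}\}_{\lambda\in\Lambda}$ an orthogonal basis of $L^2(\mu)$. *)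

theory Defs
  imports "HOL-Probability.Probability"
begin

definition delta_set :: "real set \<Rightarrow> real measure" where
  "delta_set A = distr (uniform_count_measure A) borel (\<lambda>x. x)"

definition moran_prod :: "(nat \<Rightarrow> nat) \<Rightarrow> nat \<Rightarrow> nat" where
  "moran_prod p n = (\<Prod>k=1..n. p k)"

fun moran_conv :: "(nat \<Rightarrow> nat) \<Rightarrow> (nat \<Rightarrow> int set) \<Rightarrow> nat \<Rightarrow> real measure" where
  "moran_conv p D 0 = return borel 0"
| "moran_conv p D (Suc n) =
     convolution (moran_conv p D n)
       (delta_set ((\<lambda>d. real_of_int d / real (moran_prod p (Suc n))) ` D (Suc n)))"

definition is_cantor_moran_measure ::
    "(nat \<Rightarrow> nat) \<Rightarrow> (nat \<Rightarrow> int set) \<Rightarrow> real measure \<Rightarrow> bool" where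
  "is_cantor_moran_measure p D \<mu> \<longleftrightarrow>
     sets \<mu> = sets borel \<and> prob_space \<mu> \<and> weak_conv_m (moran_conv p D) \<mu>"

definition exp_fun :: "real \<Rightarrow> real \<Rightarrow> complex" where
  "exp_fun l x = exp (2 * of_real pi * \<i> * of_real (l * x))"

definition exp_orthogonal_basis :: "real measure \<Rightarrow> real set \<Rightarrow> bool" where
  "exp_orthogonal_basis \<mu> \<Lambda> \<longleftrightarrow>
     (\<forall>l\<in>\<Lambda>. \<forall>l'\<in>\<Lambda>. l \<noteq> l' \<longrightarrow>
        (\<integral>x. exp_fun l x * cnj (exp_fun l' x) \<partial>\<mu>) = 0) \<and>
     (\<forall>f :: real \<Rightarrow> complex.
        f \<in> borel_measurable \<mu> \<and> integrable \<mu> (\<lambda>x. (cmod (f x))\<^sup>2) \<and>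
        (\<forall>l\<in>\<Lambda>. (\<integral>x. f x * cnj (exp_fun l x) \<partial>\<mu>) = 0)
        \<longrightarrow> (AE x in \<mu>. f x = 0))"

definition spectral_measure :: "real measure \<Rightarrow> bool" where
  "spectral_measure \<mu> \<longleftrightarrow> prob_space \<mu> \<and>
     (\<exists>\<Lambda>::real set. countable \<Lambda> \<and> exp_orthogonal_basis \<mu> \<Lambda>)"

end

theory Submission
  imports Defs
begin

(* The Fourier transform of the n-th convolution is \<Prod>k=1..n m_k(t / (p_1\<cdots>p_k)) with the mask
   m_k(u) = (1 + e^{2iu} + e^{i(3k\<^sup>2+1)u}) / 3.  Since the digits 0, 2, 3k\<^sup>2+1 are distinct modulo 3,
   |m_k|\<^sup>2 summed over the shifts u, u \<plusminus> 2\<pi>/3 equals 1, and m_k vanishes at 2\<pi>z/3 for z not divisible by 3.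
   Take \<Lambda> = {\<Sum>k c_k p_1\<cdots>p_k / 3 : c_k \<in> {-1, 0, 1}}, finite sums.  The zeros of the masks give
   orthogonality, and the shift identity gives \<Sum>\<lambda>\<in>\<Lambda>_n |\<mu>_n^(\<xi> - \<lambda>)|\<^sup>2 = 1 at every finite stage.
   Because p_1\<cdots>p_k grows factorially while the digits grow only quadratically, the tail products
   \<Prod>k>n |m_k|\<^sup>2 are bounded below uniformly at the relevant points, so the identity survives the limit:
   \<Sum>\<lambda>\<in>\<Lambda> |\<mu>^(\<xi> - \<lambda>)|\<^sup>2 = 1.  This Parseval identity for every exponential e_\<xi> yields completeness,
   via uniqueness of the Fourier transform.  The measure itself exists because the \<mu>_n live on [0, 4]
   and their Fourier transforms converge as absolutely convergent infinite products. *)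

section \<open>Discrete uniform measures and convolutions\<close>

lemma real_distribution_delta_set:
  assumes "finite A" "A \<noteq> {}"
  shows "real_distribution (delta_set A)"
proof -
  interpret prob_space "uniform_count_measure A"
    using assms by (rule prob_space_uniform_count_measure)
  show ?thesis unfolding delta_set_def
    by (rule real_distribution_distr) simp
qed

lemma char_delta_set:
  assumes "finite A" "A \<noteq> {}"
  shows "char (delta_set A) t = (\<Sum>a\<in>A. iexp (t * a)) / card A"
proof -
  have "char (delta_set A) t = (\<integral>x. iexp (t * x) \<partial>uniform_count_measure A)"
    unfolding char_def delta_set_def by (subst integral_distr) auto
  also have "\<dots> = (\<Sum>a\<in>A. (1 / card A) *\<^sub>R iexp (t * a))"
    unfolding uniform_count_measure_def
    by (rule lebesgue_integral_point_measure_finite) (auto simp: assms)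
  also have "\<dots> = (\<Sum>a\<in>A. iexp (t * a)) / card A"
    by (simp add: sum_divide_distrib scaleR_conv_of_real)
  finally show ?thesis .
qed

lemma AE_delta_set: "finite A \<Longrightarrow> AE x in delta_set A. x \<in> A"
  unfolding delta_set_def
  by (subst AE_distr_iff)
     (auto simp: finite_imp_closed space_uniform_count_measure intro: AE_I2)

lemma real_distribution_convolution:
  assumes "real_distribution M" "real_distribution N"
  shows "real_distribution (convolution M N)"
proof -
  interpret M: real_distribution M by fact
  interpret N: real_distribution N by fact
  interpret MN: pair_prob_space M N ..
  show ?thesis unfolding convolution_def
    by (rule MN.real_distribution_distr) simp
qed

lemma char_convolution:
  assumes "real_distribution M" "real_distribution N"
  shows "char (convolution M N) t = char M t * char N t"
proof -
  interpret M: real_distribution M by fact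
  interpret N: real_distribution N by fact
  interpret MN: pair_prob_space M N ..
  have "char (convolution M N) t = (\<integral>z. iexp (t * (fst z + snd z)) \<partial>(M \<Otimes>\<^sub>M N))"
    unfolding char_def convolution_def
    by (subst integral_distr) (auto simp: case_prod_beta)
  also have "\<dots> = (\<integral>x. \<integral>y. iexp (t * (fst (x,y) + snd (x,y))) \<partial>N \<partial>M)"
    by (rule MN.integral_fst'[symmetric]) (auto intro!: MN.integrable_const_bound[where B=1])
  also have "\<dots> = (\<integral>x. iexp (t*x) * char N t \<partial>M)"
    unfolding char_def by (simp add: distrib_left exp_add mult.assoc)
  also have "\<dots> = char M t * char N t"
    unfolding char_def by simp
  finally show ?thesis .
qed

lemma AE_convolution_atLeastAtMost:
  assumes "real_distribution M" "real_distribution N"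
    and "AE x in M. x \<in> {a..b}" and "AE y in N. y \<in> {c..d}"
  shows "AE z in convolution M N. z \<in> {a + c..b + d}"
proof -
  interpret M: real_distribution M by fact
  interpret N: real_distribution N by fact
  interpret MN: pair_prob_space M N ..
  have "AE w in M \<Otimes>\<^sub>M N. fst w + snd w \<in> {a + c..b + d}"
  proof (rule MN.AE_pair_measure)
    show "{w \<in> space (M \<Otimes>\<^sub>M N). fst w + snd w \<in> {a + c..b + d}} \<in> sets (M \<Otimes>\<^sub>M N)"
      by measurable
    show "AE x in M. AE y in N. fst (x, y) + snd (x, y) \<in> {a + c..b + d}"
      using assms(3)
    proof eventually_elim
      case (elim x)
      show ?case using assms(4) by eventually_elim (use elim in auto)
    qed
  qed
  then show ?thesis unfolding convolution_def
    by (subst AE_distr_iff) (auto simp: case_prod_beta)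
qed

lemma borel_measurable_cnj[measurable]:
  "g \<in> borel_measurable M \<Longrightarrow> (\<lambda>x. cnj (g x)) \<in> borel_measurable M"
  by (rule borel_measurable_continuous_on[where f=cnj]) (auto intro: continuous_intros)

section \<open>Uniqueness of the Fourier transform of integrable functions\<close>

lemma real_distribution_normalized_density:
  assumes "real_distribution M" and [measurable]: "h \<in> borel_measurable M"
    and "integrable M h" "\<And>x. 0 \<le> h x" "(\<integral>x. h x \<partial>M) = a" "a > 0"
  shows "real_distribution (density M (\<lambda>x. ennreal (h x / a)))"
proof -
  have "emeasure (density M (\<lambda>x. ennreal (h x / a))) (space M) = (\<integral>\<^sup>+ x. ennreal (h x / a) \<partial>M)"
    by (auto simp: emeasure_density intro: nn_integral_cong)
  also have "\<dots> = ennreal (\<integral>x. h x / a \<partial>M)"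
    by (rule nn_integral_eq_integral) (use assms in auto)
  also have "\<dots> = 1" using assms by simp
  finally have "prob_space (density M (\<lambda>x. ennreal (h x / a)))"
    by (intro prob_spaceI) simp
  then show ?thesis using assms(1)
    by (simp add: real_distribution_def real_distribution_axioms_def)
qed

lemma char_normalized_density:
  assumes "sets M = sets borel" and [measurable]: "f \<in> borel_measurable M"
    and "\<And>x. 0 \<le> f x" "a > 0"
  shows "char (density M (\<lambda>x. ennreal (f x / a))) t = inverse a *\<^sub>R (\<integral>x. f x *\<^sub>R iexp (t * x) \<partial>M)"
proof -
  have [measurable]: "(\<lambda>x. iexp (t * x)) \<in> borel_measurable M"
    unfolding measurable_cong_sets[OF assms(1) refl] by measurable
  have "char (density M (\<lambda>x. ennreal (f x / a))) t = (\<integral>x. (f x / a) *\<^sub>R iexp (t * x) \<partial>M)"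
    unfolding char_def by (rule integral_density) (use assms in auto)
  also have "\<dots> = (\<integral>x. inverse a *\<^sub>R (f x *\<^sub>R iexp (t * x)) \<partial>M)"
    by (simp add: field_simps)
  also have "\<dots> = inverse a *\<^sub>R (\<integral>x. f x *\<^sub>R iexp (t * x) \<partial>M)"
    by (rule integral_scaleR_right)
  finally show ?thesis .
qed

text \<open>Normalising \<open>g\<close> and \<open>h\<close> to probability densities reduces this to Levy's uniqueness theorem.\<close>

lemma Fourier_eq_imp_AE_eq_nonneg:
  fixes M :: "real measure" and g h :: "real \<Rightarrow> real"
  assumes M: "real_distribution M" and "integrable M g" "integrable M h"
    and g0: "\<And>x. 0 \<le> g x" and h0: "\<And>x. 0 \<le> h x"
    and Fourier: "\<And>t. (\<integral>x. g x *\<^sub>R iexp (t * x) \<partial>M) = (\<integral>x. h x *\<^sub>R iexp (t * x) \<partial>M)"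
  shows "AE x in M. g x = h x"
proof -
  interpret real_distribution M by (rule M)
  have [measurable]: "g \<in> borel_measurable M" "h \<in> borel_measurable M"
    using assms by auto
  define a where "a = (\<integral>x. g x \<partial>M)"
  have "complex_of_real (\<integral>x. h x \<partial>M) = complex_of_real a"
    using Fourier[of 0] unfolding a_def by (simp add: scaleR_conv_of_real)
  then have ha: "(\<integral>x. h x \<partial>M) = a"
    by (simp only: of_real_eq_iff)
  consider "a = 0" | "a > 0"
    using g0 unfolding a_def by (metis integral_nonneg_AE AE_I2 order.order_iff_strict)
  then show ?thesis
  proof cases
    case 1
    then have "AE x in M. g x = 0" "AE x in M. h x = 0"
      using assms ha unfolding a_def by (subst integral_nonneg_eq_0_iff_AE[symmetric]; auto)+
    then show ?thesis by eventually_elim simp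
  next
    case 2
    let ?Mg = "density M (\<lambda>x. ennreal (g x / a))" and ?Mh = "density M (\<lambda>x. ennreal (h x / a))"
    have "char ?Mg = char ?Mh"
      using char_normalized_density[of M g a] char_normalized_density[of M h a] g0 h0 2 Fourier by auto
    then have "?Mg = ?Mh"
      by (intro Levy_uniqueness real_distribution_normalized_density) (use assms ha 2 in \<open>auto simp: a_def\<close>)
    then have "AE x in M. ennreal (g x / a) = ennreal (h x / a)"
      by (subst (asm) finite_density_unique)
         (use assms 2 in \<open>auto simp: nn_integral_eq_integral\<close>)
    then show ?thesis
      by eventually_elim (use g0 h0 2 in \<open>auto simp: ennreal_inj\<close>)
  qed
qed

lemma Fourier_eq_0_imp_AE_zero_real:
  fixes M :: "real measure" and g :: "real \<Rightarrow> real"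
  assumes M: "real_distribution M" and g: "integrable M g"
    and Fourier: "\<And>t. (\<integral>x. g x *\<^sub>R iexp (t * x) \<partial>M) = 0"
  shows "AE x in M. g x = 0"
proof -
  interpret real_distribution M by (rule M)
  have [measurable]: "g \<in> borel_measurable M" using g by auto
  define gp gn where "gp x = max (g x) 0" and "gn x = max (- g x) 0" for x
  have int: "integrable M (\<lambda>x. gp x *\<^sub>R iexp (t * x))" "integrable M (\<lambda>x. gn x *\<^sub>R iexp (t * x))" for t
    by (rule Bochner_Integration.integrable_bound[where f=g]; use g in \<open>auto simp: gp_def gn_def\<close>)+
  have "AE x in M. gp x = gn x"
  proof (rule Fourier_eq_imp_AE_eq_nonneg[OF M])
    fix t
    have "(\<integral>x. gp x *\<^sub>R iexp (t * x) \<partial>M) - (\<integral>x. gn x *\<^sub>R iexp (t * x) \<partial>M)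
        = (\<integral>x. g x *\<^sub>R iexp (t * x) \<partial>M)"
      unfolding Bochner_Integration.integral_diff[OF int, symmetric]
      by (rule Bochner_Integration.integral_cong) (auto simp: gp_def gn_def scaleR_diff_left[symmetric])
    then show "(\<integral>x. gp x *\<^sub>R iexp (t * x) \<partial>M) = (\<integral>x. gn x *\<^sub>R iexp (t * x) \<partial>M)"
      using Fourier by simp
  qed (use g in \<open>auto simp: gp_def gn_def\<close>)
  then show ?thesis by eventually_elim (auto simp: gp_def gn_def split: if_splits)
qed

lemma Fourier_eq_0_imp_AE_zero:
  fixes M :: "real measure" and f :: "real \<Rightarrow> complex"
  assumes M: "real_distribution M" and f: "integrable M f"
    and Fourier: "\<And>t. (\<integral>x. f x * iexp (t * x) \<partial>M) = 0"
  shows "AE x in M. f x = 0"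
proof -
  interpret real_distribution M by (rule M)
  have [measurable]: "f \<in> borel_measurable M" using f by auto
  have int: "integrable M (\<lambda>x. f x * iexp (t * x))" "integrable M (\<lambda>x. cnj (f x) * iexp (t * x))" for t
    by (rule Bochner_Integration.integrable_bound[OF f]; auto simp: norm_mult)+
  have Fourier_cnj: "(\<integral>x. cnj (f x) * iexp (t * x) \<partial>M) = 0" for t
  proof -
    have "(\<lambda>x. cnj (f x) * iexp (t * x)) = (\<lambda>x. cnj (f x * iexp (- t * x)))"
      by (simp add: exp_cnj)
    then show ?thesis using Fourier[of "- t"] by (simp del: complex_cnj_mult)
  qed
  have "AE x in M. Re (f x) = 0"
  proof (rule Fourier_eq_0_imp_AE_zero_real[OF M])
    fix t
    have "complex_of_real (Re z) = (z + cnj z) / 2" for z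
      using complex_add_cnj[of z] by simp
    then have "(\<lambda>x. Re (f x) *\<^sub>R iexp (t * x)) = (\<lambda>x. (f x * iexp (t * x) + cnj (f x) * iexp (t * x)) / 2)"
      by (simp add: scaleR_conv_of_real ring_distribs add_divide_distrib)
    then show "(\<integral>x. Re (f x) *\<^sub>R iexp (t * x) \<partial>M) = 0"
      using int Fourier Fourier_cnj by simp
  qed (use f in auto)
  moreover have "AE x in M. Im (f x) = 0"
  proof (rule Fourier_eq_0_imp_AE_zero_real[OF M])
    fix t
    have "complex_of_real (Im z) = (z - cnj z) / (2 * \<i>)" for z
      using complex_diff_cnj[of z] by (simp add: field_simps)
    then have "(\<lambda>x. Im (f x) *\<^sub>R iexp (t * x)) = (\<lambda>x. (f x * iexp (t * x) - cnj (f x) * iexp (t * x)) / (2 * \<i>))"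
      by (simp add: scaleR_conv_of_real ring_distribs diff_divide_distrib mult.assoc)
    then show "(\<integral>x. Im (f x) *\<^sub>R iexp (t * x) \<partial>M) = 0"
      using int Fourier Fourier_cnj by simp
  qed (use f in auto)
  ultimately show ?thesis by eventually_elim (simp add: complex_eq_iff)
qed

lemma nested_sums_tendsto_1:
  fixes A :: "nat \<Rightarrow> 'a \<Rightarrow> real" and B :: "'a \<Rightarrow> real" and L :: "nat \<Rightarrow> 'a set"
  assumes fin: "\<And>n. finite (L n)" and mono: "\<And>m n. m \<le> n \<Longrightarrow> L m \<subseteq> L n"
    and sum_A: "\<And>n. (\<Sum>l\<in>L n. A n l) = 1"
    and A_tendsto: "\<And>l. (\<lambda>n. A n l) \<longlonglongrightarrow> B l"
    and B_nonneg: "\<And>l. 0 \<le> B l" and B_le_A: "\<And>n l. B l \<le> A n l"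
    and \<delta>: "\<delta> > 0" and lower: "\<And>n l. n \<ge> n\<^sub>0 \<Longrightarrow> l \<in> L n \<Longrightarrow> \<delta> * A n l \<le> B l"
  shows "(\<lambda>n. \<Sum>l\<in>L n. B l) \<longlonglongrightarrow> 1"
proof -
  define s where "s n = (\<Sum>l\<in>L n. B l)" for n
  have s_le_1: "s n \<le> 1" for n
    unfolding s_def sum_A[of n, symmetric] by (rule sum_mono) (rule B_le_A)
  have "incseq s"
    unfolding incseq_def s_def by (intro allI impI sum_mono2) (use fin mono B_nonneg in auto)
  then obtain S where S: "s \<longlonglongrightarrow> S"
    using incseq_convergent s_le_1 by blast
  have s_le_S: "s n \<le> S" for n using incseq_le[OF \<open>incseq s\<close> S] by simp
  txt \<open>On \<open>L n - L N\<close> the weights \<open>A n\<close> are at most \<open>B / \<delta>\<close>, whose total tends to 0 as \<open>N\<close> grows.\<close>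
  have "1 \<le> s N + (S - s N) / \<delta>" for N
  proof (rule LIMSEQ_le_const[where X="\<lambda>n. (\<Sum>l\<in>L N. A n l) + (S - s N) / \<delta>"])
    show "(\<lambda>n. (\<Sum>l\<in>L N. A n l) + (S - s N) / \<delta>) \<longlonglongrightarrow> s N + (S - s N) / \<delta>"
      unfolding s_def by (intro tendsto_intros A_tendsto)
    show "\<exists>n\<^sub>1. \<forall>n\<ge>n\<^sub>1. 1 \<le> (\<Sum>l\<in>L N. A n l) + (S - s N) / \<delta>"
    proof (intro exI allI impI)
      fix n assume n: "n \<ge> max N n\<^sub>0"
      have sub: "L N \<subseteq> L n" using mono n by simp
      have "(\<Sum>l\<in>L n - L N. A n l) \<le> (\<Sum>l\<in>L n - L N. B l / \<delta>)"
        using lower[of n] n \<delta> by (intro sum_mono) (auto simp: field_simps)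
      also have "\<dots> = (s n - s N) / \<delta>"
        unfolding s_def using sum.subset_diff[OF sub fin, of B] by (simp add: sum_divide_distrib)
      also have "\<dots> \<le> (S - s N) / \<delta>"
        using s_le_S[of n] \<delta> by (simp add: divide_right_mono)
      finally show "1 \<le> (\<Sum>l\<in>L N. A n l) + (S - s N) / \<delta>"
        using sum_A[of n] sum.subset_diff[OF sub fin, of "A n"] by simp
    qed
  qed
  moreover have "(\<lambda>N. s N + (S - s N) / \<delta>) \<longlonglongrightarrow> S + (S - S) / \<delta>"
    using \<delta> by (intro tendsto_intros S) auto
  ultimately have "1 \<le> S"
    by (intro LIMSEQ_le_const[where X="\<lambda>N. s N + (S - s N) / \<delta>"]) auto
  moreover have "S \<le> 1"
    using S s_le_1 by (intro LIMSEQ_le_const2) auto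
  ultimately show ?thesis using S unfolding s_def by simp
qed

section \<open>The mask of the Moran measure\<close>

definition moran_scale :: "nat \<Rightarrow> real" where
  "moran_scale k = 3 ^ k * fact k"

definition top_digit :: "nat \<Rightarrow> real" where
  "top_digit k = 3 * (real k)\<^sup>2 + 1"

definition mask :: "nat \<Rightarrow> real \<Rightarrow> complex" where
  "mask k u = (1 + iexp (2 * u) + iexp (top_digit k * u)) / 3"

definition mask_sq :: "nat \<Rightarrow> real \<Rightarrow> real" where
  "mask_sq k u = (cmod (mask k u))\<^sup>2"

lemma moran_scale_pos: "moran_scale k > 0"
  by (simp add: moran_scale_def)

lemma moran_scale_Suc: "moran_scale (Suc k) = 3 * (real (Suc k) * moran_scale k)"
  by (simp add: moran_scale_def algebra_simps)

lemma moran_scale_multiple: "j \<le> n \<Longrightarrow> \<exists>N::nat. moran_scale n = of_nat N * moran_scale j"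
proof (induction n)
  case (Suc n)
  show ?case
  proof (cases "j = Suc n")
    case False
    with Suc obtain N where "moran_scale n = of_nat N * moran_scale j" by auto
    then show ?thesis unfolding moran_scale_Suc by (intro exI[of _ "3 * Suc n * N"]) simp
  qed (intro exI[of _ 1], simp)
qed (intro exI[of _ 1], simp)

lemma moran_scale_Ints: "moran_scale n \<in> \<int>"
  by (simp add: moran_scale_def fact_in_Ints)

lemma moran_scale_ge: "real n \<le> moran_scale n"
proof -
  have "real n \<le> fact n" by (induction n) (auto simp: fact_Suc)
  also have "\<dots> \<le> 3 ^ n * fact n" by (simp add: one_le_power)
  finally show ?thesis by (simp add: moran_scale_def)
qed

lemma top_digit_ge: "k \<ge> 1 \<Longrightarrow> top_digit k \<ge> 4"
  by (simp add: top_digit_def one_le_power)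

lemma top_digit_le: "k \<ge> 1 \<Longrightarrow> top_digit k \<le> 4 * (real k)\<^sup>2"
  by (simp add: top_digit_def one_le_power)

lemma cos_add_2pi_int: "cos (x + 2 * pi * of_int n) = cos x"
  by (simp add: cos_add)

lemma cos_2pi_third_int:
  fixes n :: int
  assumes "\<not> 3 dvd n"
  shows "cos (2 * pi * of_int n / 3) = -1/2"
proof -
  have "n mod 3 = 1 \<or> n mod 3 = 2" using assms by presburger
  moreover have "n = 3 * (n div 3) + n mod 3" by simp
  ultimately obtain q where "n = 3 * q + 1 \<or> n = 3 * q + 2" by metis
  then show ?thesis
  proof
    assume "n = 3 * q + 1"
    then have "2 * pi * of_int n / 3 = 2 * pi / 3 + 2 * pi * of_int q" by (simp add: field_simps)
    then show ?thesis by (simp only: cos_add_2pi_int cos_120)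
  next
    assume "n = 3 * q + 2"
    then have "2 * pi * of_int n / 3 = - (2 * pi / 3) + 2 * pi * of_int (q + 1)"
      by (simp add: field_simps)
    then show ?thesis by (simp only: cos_add_2pi_int cos_minus cos_120)
  qed
qed

lemma cos_sum_thirds:
  fixes m :: int
  assumes "\<not> 3 dvd m"
  shows "cos (of_int m * (x - 2 * pi / 3)) + cos (of_int m * x) + cos (of_int m * (x + 2 * pi / 3)) = 0"
proof -
  let ?\<theta> = "2 * pi * of_int m / 3"
  have "of_int m * (x - 2 * pi / 3) = of_int m * x - ?\<theta>" "of_int m * (x + 2 * pi / 3) = of_int m * x + ?\<theta>"
    by (simp_all add: algebra_simps)
  moreover have "cos (of_int m * x - ?\<theta>) + cos (of_int m * x + ?\<theta>) = 2 * cos (of_int m * x) * cos ?\<theta>"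
    by (simp add: cos_diff cos_add)
  ultimately show ?thesis using cos_2pi_third_int[OF assms] by simp
qed

lemma cos_ge_1_minus_sq: "1 - y\<^sup>2 / 2 \<le> cos (y :: real)"
proof -
  have "cos y = 1 - 2 * sin (y / 2) ^ 2" using cos_double_sin[of "y / 2"] by simp
  moreover have "sin (y / 2) ^ 2 \<le> (y / 2)\<^sup>2"
    using abs_sin_x_le_abs_x[of "y / 2"] by (metis abs_le_square_iff)
  ultimately show ?thesis by (simp add: power_divide)
qed

lemma mask_sq_sin_cos:
  "mask_sq k u = ((1 + cos (2 * u) + cos (top_digit k * u))\<^sup>2 + (sin (2 * u) + sin (top_digit k * u))\<^sup>2) / 9"
  unfolding mask_sq_def mask_def cis_conv_exp[symmetric] cmod_power2 by (simp add: power_divide)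

lemma mask_sq_cos:
  "mask_sq k u = (3 + 2 * cos (2 * u) + 2 * cos (top_digit k * u) + 2 * cos ((top_digit k - 2) * u)) / 9"
proof -
  let ?a = "cos (2 * u)" and ?c = "sin (2 * u)" and ?b = "cos (top_digit k * u)" and ?d = "sin (top_digit k * u)"
  have "(1 + ?a + ?b)\<^sup>2 + (?c + ?d)\<^sup>2 = 1 + (?a\<^sup>2 + ?c\<^sup>2) + (?b\<^sup>2 + ?d\<^sup>2) + 2 * ?a + 2 * ?b + 2 * (?b * ?a + ?d * ?c)"
    by (simp add: power2_eq_square algebra_simps)
  also have "?b * ?a + ?d * ?c = cos ((top_digit k - 2) * u)"
    using cos_diff[of "top_digit k * u" "2 * u"] by (simp add: algebra_simps)
  finally show ?thesis unfolding mask_sq_sin_cos by simp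
qed

lemma mask_sq_nonneg: "0 \<le> mask_sq k u"
  by (simp add: mask_sq_def)

lemma mask_sq_le_1: "mask_sq k u \<le> 1"
proof -
  have "3 + 2 * cos (2 * u) + 2 * cos (top_digit k * u) + 2 * cos ((top_digit k - 2) * u) \<le> 9"
    using cos_le_one[of "2 * u"] cos_le_one[of "top_digit k * u"] cos_le_one[of "(top_digit k - 2) * u"]
    by linarith
  then show ?thesis unfolding mask_sq_cos by simp
qed

lemma mask_sq_thirds: "mask_sq k (u - 2 * pi / 3) + mask_sq k u + mask_sq k (u + 2 * pi / 3) = 1"
proof -
  have "\<not> 3 dvd (2 :: int)" "\<not> 3 dvd (3 * int k ^ 2 + 1)" "\<not> 3 dvd (3 * int k ^ 2 - 1)"
    by presburger+
  from this[THEN cos_sum_thirds, of u] show ?thesis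
    unfolding mask_sq_cos by (simp add: top_digit_def field_simps)
qed

lemma mask_sq_periodic: "mask_sq k (u + 2 * pi * of_int z) = mask_sq k u"
proof -
  have "cos (of_int m * (u + 2 * pi * of_int z)) = cos (of_int m * u)" for m :: int
    using cos_add_2pi_int[of "of_int m * u" "m * z"] by (simp add: algebra_simps)
  from this[of 2] this[of "3 * int k ^ 2 + 1"] this[of "3 * int k ^ 2 - 1"] show ?thesis
    unfolding mask_sq_cos by (simp add: top_digit_def)
qed

lemma mask_sq_zero:
  assumes "\<not> 3 dvd z"
  shows "mask_sq k (2 * pi * of_int z / 3) = 0"
proof -
  have cos_eq: "cos (of_int m * (2 * pi * of_int z / 3)) = -1/2" if "\<not> 3 dvd m" for m :: int
    using cos_2pi_third_int[of "m * z"] that assms by (simp add: prime_dvd_mult_iff mult.left_commute)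
  have "\<not> 3 dvd (2 :: int)" "\<not> 3 dvd (3 * int k ^ 2 + 1)" "\<not> 3 dvd (3 * int k ^ 2 - 1)"
    by presburger+
  from this[THEN cos_eq] show ?thesis
    unfolding mask_sq_cos by (simp add: top_digit_def)
qed

lemma mask_sq_ge_small:
  assumes "\<bar>u\<bar> \<le> 1/2"
  shows "mask_sq k u \<ge> 1/36"
proof -
  have "u\<^sup>2 \<le> (1/2)\<^sup>2"
    using power_mono[OF assms, of 2] by (simp add: power2_abs)
  then have "(2 * u)\<^sup>2 / 2 \<le> 1/2" by (simp add: power_mult_distrib power2_eq_square)
  then have "cos (2 * u) \<ge> 1/2"
    using cos_ge_1_minus_sq[of "2 * u"] by linarith
  then have "1/2 \<le> 1 + cos (2 * u) + cos (top_digit k * u)"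
    using cos_ge_minus_one[of "top_digit k * u"] by linarith
  then have "(1/2)\<^sup>2 \<le> (1 + cos (2 * u) + cos (top_digit k * u))\<^sup>2"
    by (rule power_mono) simp
  moreover have "(1 + cos (2 * u) + cos (top_digit k * u))\<^sup>2 / 9 \<le> mask_sq k u"
    unfolding mask_sq_sin_cos by (intro divide_right_mono) auto
  ultimately show ?thesis by (simp add: power2_eq_square)
qed

lemma mask_sq_ge:
  assumes "k \<ge> 1"
  shows "mask_sq k u \<ge> 1 - (top_digit k * u)\<^sup>2 / 4"
proof -
  have D: "top_digit k \<ge> 4" using top_digit_ge assms by simp
  have "\<bar>2 * u\<bar> \<le> \<bar>top_digit k * u / 2\<bar>" "\<bar>(top_digit k - 2) * u\<bar> \<le> \<bar>top_digit k * u\<bar>"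
    using D by (simp_all add: abs_mult mult_right_mono)
  then have bounds: "(2 * u)\<^sup>2 \<le> (top_digit k * u)\<^sup>2 / 4" "((top_digit k - 2) * u)\<^sup>2 \<le> (top_digit k * u)\<^sup>2"
    by (simp_all only: abs_le_square_iff power_divide) simp
  have "1 - mask_sq k u
      = ((1 - cos (2 * u)) + (1 - cos (top_digit k * u)) + (1 - cos ((top_digit k - 2) * u))) * 2 / 9"
    unfolding mask_sq_cos by (simp add: field_simps)
  also have "\<dots> \<le> ((2 * u)\<^sup>2 / 2 + (top_digit k * u)\<^sup>2 / 2 + ((top_digit k - 2) * u)\<^sup>2 / 2) * 2 / 9"
    using cos_ge_1_minus_sq[of "2 * u"] cos_ge_1_minus_sq[of "top_digit k * u"]
      cos_ge_1_minus_sq[of "(top_digit k - 2) * u"]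
    by (intro divide_right_mono mult_right_mono add_mono) auto
  also have "\<dots> \<le> (top_digit k * u)\<^sup>2 / 4"
    using bounds by simp
  finally show ?thesis by simp
qed

lemma norm_mask_minus_1:
  assumes "k \<ge> 1"
  shows "cmod (mask k u - 1) \<le> top_digit k * \<bar>u\<bar>"
proof -
  have D: "top_digit k \<ge> 4" using top_digit_ge assms by simp
  have eq: "mask k u - 1 = ((iexp (2 * u) - 1) + (iexp (top_digit k * u) - 1)) / 3"
    by (simp add: mask_def field_simps)
  have "cmod (mask k u - 1) = cmod ((iexp (2 * u) - 1) + (iexp (top_digit k * u) - 1)) / 3"
    unfolding eq by (simp add: norm_divide)
  also have "\<dots> \<le> (cmod (iexp (2 * u) - 1) + cmod (iexp (top_digit k * u) - 1)) / 3"
    by (intro divide_right_mono norm_triangle_ineq) simp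
  also have "\<dots> \<le> (\<bar>2 * u\<bar> + \<bar>top_digit k * u\<bar>) / 3"
    using iexp_approx1[of "2 * u" 0] iexp_approx1[of "top_digit k * u" 0] by simp
  also have "\<dots> \<le> top_digit k * \<bar>u\<bar>"
  proof -
    have "\<bar>u\<bar> * 1 \<le> \<bar>u\<bar> * top_digit k" using D by (intro mult_left_mono) auto
    then show ?thesis using D by (simp add: abs_mult)
  qed
  finally show ?thesis .
qed

section \<open>The candidate spectrum and the finite-stage Parseval identity\<close>

definition prod_mask_sq :: "nat \<Rightarrow> real \<Rightarrow> real" where
  "prod_mask_sq n t = (\<Prod>k=1..n. mask_sq k (t / moran_scale k))"

fun spectrum_stage :: "nat \<Rightarrow> real set" where
  "spectrum_stage 0 = {0}"
| "spectrum_stage (Suc n) =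
     (\<lambda>(l, c). l + of_int c * real (Suc n) * moran_scale n) ` (spectrum_stage n \<times> {-1, 0, 1})"

lemma prod_mask_sq_Suc: "prod_mask_sq (Suc n) t = prod_mask_sq n t * mask_sq (Suc n) (t / moran_scale (Suc n))"
  by (simp add: prod_mask_sq_def prod.nat_ivl_Suc')

lemma prod_mask_sq_nonneg: "0 \<le> prod_mask_sq n t"
  by (simp add: prod_mask_sq_def mask_sq_nonneg prod_nonneg)

lemma decseq_prod_mask_sq: "decseq (\<lambda>n. prod_mask_sq n t)"
  by (rule decseq_SucI)
     (simp add: prod_mask_sq_Suc mult_left_le prod_mask_sq_nonneg mask_sq_le_1 mask_sq_nonneg)

lemma prod_mask_sq_split:
  "j \<le> m \<Longrightarrow> prod_mask_sq m t = prod_mask_sq j t * (\<Prod>k=Suc j..m. mask_sq k (t / moran_scale k))"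
proof (induction m)
  case (Suc m)
  then show ?case
    by (cases "j = Suc m") (simp_all add: prod_mask_sq_Suc prod.nat_ivl_Suc' le_Suc_eq mult.assoc)
qed simp

lemma prod_mask_sq_periodic: "prod_mask_sq n (t + 2 * pi * of_int z * moran_scale n) = prod_mask_sq n t"
  unfolding prod_mask_sq_def
proof (rule prod.cong[OF refl])
  fix k assume "k \<in> {1..n}"
  then obtain N where N: "moran_scale n = of_nat N * moran_scale k"
    using moran_scale_multiple by auto
  have "(t + 2 * pi * of_int z * moran_scale n) / moran_scale k = t / moran_scale k + 2 * pi * of_int (z * int N)"
    using moran_scale_pos[of k] by (simp add: N field_simps)
  then show "mask_sq k ((t + 2 * pi * of_int z * moran_scale n) / moran_scale k) = mask_sq k (t / moran_scale k)"
    by (simp only: mask_sq_periodic)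
qed

lemma finite_spectrum_stage: "finite (spectrum_stage n)"
  by (induction n) auto

lemma spectrum_stage_mono: "m \<le> n \<Longrightarrow> spectrum_stage m \<subseteq> spectrum_stage n"
proof (induction n)
  case (Suc n)
  have "spectrum_stage n \<subseteq> spectrum_stage (Suc n)"
    by (auto intro!: image_eqI[of _ _ "(l, 0)" for l])
  with Suc show ?case by (auto simp: le_Suc_eq)
qed simp

lemma spectrum_stage_Ints: "l \<in> spectrum_stage n \<Longrightarrow> l \<in> \<int>"
proof (induction n arbitrary: l)
  case (Suc n)
  then obtain a c where "a \<in> spectrum_stage n" "l = a + of_int c * real (Suc n) * moran_scale n"
    by auto
  then show ?case using Suc.IH moran_scale_Ints[of n] by auto
qed simp

lemma spectrum_stage_abs_le: "l \<in> spectrum_stage n \<Longrightarrow> \<bar>l\<bar> \<le> moran_scale n / 2"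
proof (induction n arbitrary: l)
  case 0 then show ?case by (simp add: moran_scale_def)
next
  case (Suc n)
  then obtain a c where ac: "a \<in> spectrum_stage n" "c \<in> {-1, 0, 1::int}"
    "l = a + of_int c * real (Suc n) * moran_scale n" by auto
  have "\<bar>of_int c * real (Suc n) * moran_scale n\<bar> \<le> real (Suc n) * moran_scale n"
    using ac(2) moran_scale_pos[of n] by (auto simp: abs_mult)
  then have "\<bar>l\<bar> \<le> moran_scale n / 2 + real (Suc n) * moran_scale n"
    using Suc.IH[OF ac(1)] ac(3) by linarith
  also have "\<dots> \<le> moran_scale (Suc n) / 2"
    unfolding moran_scale_Suc using moran_scale_pos[of n] by (simp add: field_simps)
  finally show ?case .
qed

text \<open>This places the difference of two distinct points of a stage in the zero set of one of the masks.\<close>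

lemma spectrum_stage_diff:
  assumes "l \<in> spectrum_stage n" "l' \<in> spectrum_stage n" "l \<noteq> l'"
  shows "\<exists>j\<in>{1..n}. \<exists>z. \<not> 3 dvd z \<and> l - l' = of_int z * moran_scale j / 3"
  using assms
proof (induction n arbitrary: l l')
  case (Suc n)
  from Suc.prems obtain a c a' c' where ac: "a \<in> spectrum_stage n" "c \<in> {-1, 0, 1::int}"
    "l = a + of_int c * real (Suc n) * moran_scale n"
    and ac': "a' \<in> spectrum_stage n" "c' \<in> {-1, 0, 1::int}" "l' = a' + of_int c' * real (Suc n) * moran_scale n"
    by auto
  show ?case
  proof (cases "a = a'")
    case True
    then have "l - l' = of_int (c - c') * moran_scale (Suc n) / 3"
      using ac(3) ac'(3) by (simp add: moran_scale_Suc algebra_simps)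
    moreover have "\<not> 3 dvd (c - c')"
      using ac(2) ac'(2) Suc.prems(3) ac(3) ac'(3) True by auto
    ultimately show ?thesis by (intro bexI[of _ "Suc n"]) auto
  next
    case False
    then obtain j z where jz: "j \<in> {1..n}" "\<not> 3 dvd z" "a - a' = of_int z * moran_scale j / 3"
      using Suc.IH[OF ac(1) ac'(1)] by auto
    obtain N where N: "moran_scale n = of_nat N * moran_scale j"
      using moran_scale_multiple[of j n] jz(1) by auto
    have "l - l' = of_int (z + 3 * ((c - c') * int (Suc n) * int N)) * moran_scale j / 3"
      using ac(3) ac'(3) jz(3) by (simp add: N algebra_simps)
    moreover have "\<not> 3 dvd (z + 3 * ((c - c') * int (Suc n) * int N))"
      using jz(2) by (simp add: dvd_add_left_iff)
    ultimately show ?thesis using jz(1) by (intro bexI[of _ j]) auto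
  qed
qed simp

lemma inj_on_spectrum_stage_Suc:
  "inj_on (\<lambda>(l, c). l + of_int c * real (Suc n) * moran_scale n) (spectrum_stage n \<times> {-1, 0, 1})"
proof (rule inj_onI, clarify)
  fix a c a' c'
  assume A: "a \<in> spectrum_stage n" "c \<in> {-1, 0, 1::int}" "a' \<in> spectrum_stage n" "c' \<in> {-1, 0, 1::int}"
    and E: "a + of_int c * real (Suc n) * moran_scale n = a' + of_int c' * real (Suc n) * moran_scale n"
  have "a = a'"
  proof (rule ccontr)
    assume "a \<noteq> a'"
    then obtain j z where jz: "j \<in> {1..n}" "\<not> 3 dvd z" "a - a' = of_int z * moran_scale j / 3"
      using spectrum_stage_diff[OF A(1) A(3)] by auto
    obtain N where N: "moran_scale n = of_nat N * moran_scale j"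
      using moran_scale_multiple[of j n] jz(1) by auto
    have "of_int z * moran_scale j = of_int (3 * ((c' - c) * int (Suc n) * int N)) * moran_scale j"
      using E jz(3) by (simp add: N algebra_simps)
    then have "real_of_int z = real_of_int (3 * ((c' - c) * int (Suc n) * int N))"
      using moran_scale_pos[of j] by simp
    then have "z = 3 * ((c' - c) * int (Suc n) * int N)"
      by (simp only: of_int_eq_iff)
    then show False using jz(2) by simp
  qed
  then show "a = a' \<and> c = c'" using E moran_scale_pos[of n] by simp
qed

lemma prod_mask_sq_spectrum_diff:
  assumes "l \<in> spectrum_stage n" "l' \<in> spectrum_stage n" "l \<noteq> l'" "n \<le> m"
  shows "prod_mask_sq m (2 * pi * (l - l')) = 0"
proof -
  obtain j z where jz: "j \<in> {1..n}" "\<not> 3 dvd z" "l - l' = of_int z * moran_scale j / 3"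
    using spectrum_stage_diff[OF assms(1-3)] by auto
  have "(l - l') / moran_scale j = of_int z / 3"
    using jz(3) moran_scale_pos[of j] by simp
  then have "2 * pi * (l - l') / moran_scale j = 2 * pi * of_int z / 3"
    by (metis times_divide_eq_right)
  then have "mask_sq j (2 * pi * (l - l') / moran_scale j) = 0"
    using mask_sq_zero[OF jz(2)] by (simp only:)
  then show ?thesis
    unfolding prod_mask_sq_def using jz(1) assms(4) by (intro prod_zero) auto
qed

text \<open>The three children of a point of stage \<open>n\<close> shift the argument of the new mask by
  \<open>0, \<plusminus>2\<pi>/3\<close> and leave the older masks unchanged by periodicity, so the identity
  \<open>mask_sq_thirds\<close> passes from stage \<open>n\<close> to stage \<open>n + 1\<close>.\<close>

lemma sum_prod_mask_sq_spectrum_stage: "(\<Sum>l\<in>spectrum_stage n. prod_mask_sq n (s - 2 * pi * l)) = 1"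
proof (induction n arbitrary: s)
  case 0 then show ?case by (simp add: prod_mask_sq_def)
next
  case (Suc n)
  let ?Q = "real (Suc n) * moran_scale n" and ?u = "\<lambda>a. (s - 2 * pi * a) / moran_scale (Suc n)"
  have child: "prod_mask_sq (Suc n) (s - 2 * pi * (a + of_int c * real (Suc n) * moran_scale n))
      = prod_mask_sq n (s - 2 * pi * a) * mask_sq (Suc n) (?u a - 2 * pi * of_int c / 3)" for a c
  proof -
    have "prod_mask_sq n (s - 2 * pi * (a + of_int c * real (Suc n) * moran_scale n))
        = prod_mask_sq n (s - 2 * pi * a + 2 * pi * of_int (- c * int (Suc n)) * moran_scale n)"
      by (simp add: algebra_simps)
    also have "\<dots> = prod_mask_sq n (s - 2 * pi * a)"
      by (rule prod_mask_sq_periodic)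
    moreover have "(s - 2 * pi * (a + of_int c * real (Suc n) * moran_scale n)) / moran_scale (Suc n)
        = ((s - 2 * pi * a) - (2 * pi * of_int c) * ?Q) / (3 * ?Q)"
      by (simp add: moran_scale_Suc algebra_simps)
    moreover have "\<dots> = ?u a - 2 * pi * of_int c / 3"
      using moran_scale_pos[of n] by (simp add: moran_scale_Suc diff_divide_distrib)
    ultimately show ?thesis by (simp add: prod_mask_sq_Suc)
  qed
  have thirds: "(\<Sum>c\<in>{-1, 0, 1::int}. mask_sq (Suc n) (u - 2 * pi * of_int c / 3)) = 1" for u
    using mask_sq_thirds[of "Suc n" u] by simp
  have "(\<Sum>l\<in>spectrum_stage (Suc n). prod_mask_sq (Suc n) (s - 2 * pi * l))
      = (\<Sum>(a, c)\<in>spectrum_stage n \<times> {-1, 0, 1}. prod_mask_sq (Suc n) (s - 2 * pi * (a + of_int c * real (Suc n) * moran_scale n)))"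
    by (subst spectrum_stage.simps(2), subst sum.reindex[OF inj_on_spectrum_stage_Suc])
       (simp add: case_prod_beta)
  also have "\<dots> = (\<Sum>a\<in>spectrum_stage n. \<Sum>c\<in>{-1, 0, 1}. prod_mask_sq (Suc n) (s - 2 * pi * (a + of_int c * real (Suc n) * moran_scale n)))"
    by (rule sum.cartesian_product[symmetric])
  also have "\<dots> = (\<Sum>a\<in>spectrum_stage n. prod_mask_sq n (s - 2 * pi * a))"
    by (simp only: child sum_distrib_left[symmetric] thirds mult_1_right)
  also have "\<dots> = 1" by (rule Suc.IH)
  finally show ?case .
qed

section \<open>A uniform lower bound for the tails of the mask products\<close>

lemma sum_gp_le:
  fixes x :: real
  assumes "0 \<le> x" "x < 1"
  shows "(\<Sum>i=m..n. x ^ i) \<le> x ^ m / (1 - x)"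
  using assms by (auto simp: sum_gp divide_right_mono)

lemma moran_scale_mono: "m \<le> n \<Longrightarrow> moran_scale m \<le> moran_scale n"
  unfolding moran_scale_def by (intro mult_mono power_increasing fact_mono) auto

lemma sq_le_2_fact: "(real k)\<^sup>2 \<le> 2 * fact k"
proof (cases k)
  case (Suc j)
  have "Suc j \<le> 2 * fact j"
    using fact_ge_self[of j] by (cases "j = 0") auto
  then have "real (Suc j) \<le> real (2 * fact j)"
    by (simp only: of_nat_le_iff)
  then have "real (Suc j) \<le> 2 * fact j" by simp
  then have "real (Suc j) * real (Suc j) \<le> real (Suc j) * (2 * fact j)"
    by (intro mult_left_mono) auto
  then show ?thesis using Suc by (simp add: power2_eq_square fact_Suc algebra_simps)
qed simp

lemma top_digit_div_moran_scale: "k \<ge> 1 \<Longrightarrow> top_digit k / moran_scale k \<le> 8 * (1/3) ^ k"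
  using top_digit_le[of k] sq_le_2_fact[of k] moran_scale_pos[of k]
  by (simp add: moran_scale_def power_one_over divide_simps)

lemma sq_mult_fact_le_fact:
  assumes "n \<ge> 1" "k \<ge> n + 3"
  shows "(real k)\<^sup>2 * fact n \<le> fact k"
proof -
  obtain j where j: "k = j + 3" using assms by (metis add.commute le_Suc_ex add_leD2)
  have "(real k)\<^sup>2 \<le> real k * real (k - 1) * real (k - 2)"
  proof -
    have k4: "4 * real k \<le> real k * real k"
      using assms by (intro mult_right_mono) auto
    have "real k \<le> real (k - 1) * real (k - 2)"
      using assms by (simp add: of_nat_diff algebra_simps) (use k4 in linarith)
    then show ?thesis by (simp add: power2_eq_square mult.assoc mult_left_mono)
  qed
  moreover have "(fact n :: real) \<le> fact j" using assms j by (intro fact_mono) simp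
  ultimately have "(real k)\<^sup>2 * fact n \<le> real k * real (k - 1) * real (k - 2) * fact j"
    by (intro mult_mono) auto
  also have "\<dots> = fact k"
    unfolding j by (simp add: fact_Suc algebra_simps numeral_3_eq_3)
  finally show ?thesis .
qed

lemma moran_scale_ratio:
  assumes "n \<ge> 1" "k \<ge> n + 3"
  shows "(real k)\<^sup>2 * moran_scale n / moran_scale k \<le> (1/3) ^ (k - n)"
proof -
  have "(3::real) ^ k = 3 ^ (k - n) * 3 ^ n" using assms by (simp add: power_add[symmetric])
  then have "moran_scale k = 3 ^ (k - n) * (3 ^ n * fact k)" by (simp add: moran_scale_def)
  then show ?thesis
    using sq_mult_fact_le_fact[OF assms] moran_scale_pos[of k]
    by (simp add: moran_scale_def power_one_over divide_simps)
qed

lemma tail_exponent_bound: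
  assumes "n \<ge> 1" "k \<ge> n + 3" "\<bar>x\<bar> \<le> 4 * pi / 3 * moran_scale n"
  shows "(top_digit k * (x / moran_scale k))\<^sup>2 / 4 \<le> 72 * (1/9) ^ (k - n)"
proof -
  have k: "k \<ge> 1" using assms by simp
  have "\<bar>top_digit k * (x / moran_scale k)\<bar> = top_digit k * \<bar>x\<bar> / moran_scale k"
    using top_digit_ge[OF k] moran_scale_pos[of k] by (simp add: abs_mult)
  also have "\<dots> \<le> (4 * (real k)\<^sup>2) * (4 * pi / 3 * moran_scale n) / moran_scale k"
    using assms(3) top_digit_le[OF k] top_digit_ge[OF k] moran_scale_pos[of k]
    by (intro divide_right_mono mult_mono) auto
  also have "\<dots> = 16 * pi / 3 * ((real k)\<^sup>2 * moran_scale n / moran_scale k)" by simp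
  also have "\<dots> \<le> 16 * pi / 3 * (1/3) ^ (k - n)"
    using moran_scale_ratio[OF assms(1,2)] by (intro mult_left_mono) auto
  finally have "(top_digit k * (x / moran_scale k))\<^sup>2 \<le> (16 * pi / 3 * (1/3) ^ (k - n))\<^sup>2"
    by (metis abs_le_square_iff abs_of_nonneg order_trans abs_ge_zero)
  also have "\<dots> = 256 * pi\<^sup>2 / 9 * (1/9) ^ (k - n)"
    by (simp add: power_mult_distrib power2_eq_square power_mult_distrib[symmetric])
  also have "\<dots> \<le> 288 * (1/9) ^ (k - n)"
  proof -
    have "pi * pi \<le> 3.15 * 3.15" using pi_approx pi_gt_zero by (intro mult_mono) auto
    then have "256 * pi\<^sup>2 / 9 \<le> 288" unfolding power2_eq_square by linarith
    then show ?thesis by (intro mult_right_mono) auto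
  qed
  finally show ?thesis by simp
qed

lemma prod_mask_sq_far_tail_ge:
  assumes "n \<ge> 1" "\<bar>x\<bar> \<le> 4 * pi / 3 * moran_scale n"
  shows "(\<Prod>k=n+3..m. mask_sq k (x / moran_scale k)) \<ge> 8/9"
proof -
  define a where "a k = (top_digit k * (x / moran_scale k))\<^sup>2 / 4" for k
  have a_le: "a k \<le> 72 * (1/9) ^ (k - n)" if "k \<in> {n+3..m}" for k
    unfolding a_def by (rule tail_exponent_bound) (use assms that in auto)
  have a01: "a k \<in> {0..1}" if "k \<in> {n+3..m}" for k
  proof -
    have "(1/9::real) ^ (k - n) \<le> (1/9) ^ 3" using that by (intro power_decreasing) auto
    then have "a k \<le> 72 * (1/9) ^ 3" using a_le[OF that] by linarith
    moreover have "0 \<le> a k" by (simp add: a_def)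
    ultimately show ?thesis by (simp add: power3_eq_cube)
  qed
  have "(\<Sum>k=n+3..m. (1/9::real) ^ (k - n)) = (\<Sum>i=3..m-n. (1/9) ^ i)"
    by (rule sum.reindex_bij_witness[of _ "\<lambda>i. i + n" "\<lambda>k. k - n"]) auto
  also have "\<dots> \<le> (1/9) ^ 3 / (1 - 1/9)"
    by (rule sum_gp_le) auto
  finally have "(\<Sum>k=n+3..m. (1/9::real) ^ (k - n)) \<le> 1/648"
    by (simp add: power3_eq_cube)
  moreover have "(\<Sum>k=n+3..m. a k) \<le> 72 * (\<Sum>k=n+3..m. (1/9) ^ (k - n))"
    unfolding sum_distrib_left by (rule sum_mono) (rule a_le)
  ultimately have "(\<Sum>k=n+3..m. a k) \<le> 1/9" by linarith
  moreover have "(\<Prod>k=n+3..m. 1 - a k) \<ge> 1 - (\<Sum>k=n+3..m. a k)"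
    by (rule Weierstrass_prod_ineq) (use a01 in auto)
  moreover have "(\<Prod>k=n+3..m. mask_sq k (x / moran_scale k)) \<ge> (\<Prod>k=n+3..m. 1 - a k)"
    using a01 mask_sq_ge[of _ "x / moran_scale _"] assms(1)
    by (intro prod_mono) (auto simp: a_def)
  ultimately show ?thesis by linarith
qed

lemma mask_sq_near_ge:
  assumes "n \<ge> 3" "n < k" "\<bar>x\<bar> \<le> 4 * pi / 3 * moran_scale n"
  shows "mask_sq k (x / moran_scale k) \<ge> 1/36"
proof (rule mask_sq_ge_small)
  have "\<bar>x / moran_scale k\<bar> = \<bar>x\<bar> / moran_scale k"
    using moran_scale_pos[of k] by simp
  also have "\<dots> \<le> 4 * pi / 3 * moran_scale n / moran_scale (Suc n)"
    using assms moran_scale_mono[of "Suc n" k] moran_scale_pos[of n] moran_scale_pos[of "Suc n"]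
    by (intro frac_le) auto
  also have "\<dots> = 4 * pi / (9 * real (Suc n))"
    using moran_scale_pos[of n] by (simp add: moran_scale_Suc)
  also have "\<dots> \<le> 4 * pi / 36"
    using assms(1) by (intro divide_left_mono) auto
  also have "\<dots> \<le> 1/2" using pi_less_4 pi_approx by simp
  finally show "\<bar>x / moran_scale k\<bar> \<le> 1/2" .
qed

lemma prod_mask_sq_tail_ge:
  assumes "n \<ge> 3" "\<bar>x\<bar> \<le> 4 * pi / 3 * moran_scale n" "n + 2 \<le> m"
  shows "prod_mask_sq n x / 1458 \<le> prod_mask_sq m x"
proof -
  have "prod_mask_sq m x = prod_mask_sq n x * mask_sq (Suc n) (x / moran_scale (Suc n))
      * mask_sq (Suc (Suc n)) (x / moran_scale (Suc (Suc n))) * (\<Prod>k=n+3..m. mask_sq k (x / moran_scale k))"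
    using prod_mask_sq_split[of "n + 2" m x] assms(3) by (simp add: prod_mask_sq_Suc numeral_3_eq_3)
  also have "\<dots> \<ge> prod_mask_sq n x * (1/36) * (1/36) * (8/9)"
    using assms mask_sq_near_ge[of n "Suc n" x] mask_sq_near_ge[of n "Suc (Suc n)" x]
      prod_mask_sq_far_tail_ge[of n x m] prod_mask_sq_nonneg[of n x]
    by (intro mult_mono) auto
  finally show ?thesis by simp
qed

section \<open>The Cantor-Moran measure exists\<close>

locale moran_3n =
  fixes p :: "nat \<Rightarrow> nat" and D :: "nat \<Rightarrow> int set"
  assumes p_eq: "\<And>n. n \<ge> 1 \<Longrightarrow> p n = 3 * n"
      and D_eq: "\<And>n. n \<ge> 1 \<Longrightarrow> D n = {0, 2, 3 * int n ^ 2 + 1}"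
begin

lemma moran_prod_eq: "real (moran_prod p k) = moran_scale k"
proof (induction k)
  case 0 then show ?case by (simp add: moran_prod_def moran_scale_def)
next
  case (Suc k)
  have "moran_prod p (Suc k) = moran_prod p k * p (Suc k)"
    by (simp add: moran_prod_def prod.nat_ivl_Suc')
  then show ?case using Suc p_eq[of "Suc k"] by (simp add: moran_scale_Suc algebra_simps)
qed

abbreviation scaled_digits :: "nat \<Rightarrow> real set" where
  "scaled_digits k \<equiv> (\<lambda>d. real_of_int d / real (moran_prod p k)) ` D k"

lemma scaled_digits_eq: "k \<ge> 1 \<Longrightarrow> scaled_digits k = {0, 2 / moran_scale k, top_digit k / moran_scale k}"
  by (simp add: D_eq moran_prod_eq top_digit_def)

lemma real_distribution_delta_digits: "k \<ge> 1 \<Longrightarrow> real_distribution (delta_set (scaled_digits k))"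
  by (simp add: scaled_digits_eq real_distribution_delta_set)

lemma char_delta_digits:
  assumes "k \<ge> 1"
  shows "char (delta_set (scaled_digits k)) t = mask k (t / moran_scale k)"
proof -
  have "0 \<noteq> 2 / moran_scale k" "0 \<noteq> top_digit k / moran_scale k" "2 / moran_scale k \<noteq> top_digit k / moran_scale k"
    using moran_scale_pos[of k] top_digit_ge[OF assms] by auto
  then show ?thesis
    unfolding scaled_digits_eq[OF assms]
    by (subst char_delta_set) (auto simp: mask_def algebra_simps)
qed

lemma real_distribution_moran_conv: "real_distribution (moran_conv p D n)"
proof (induction n)
  case 0 then show ?case
    by (simp add: real_distribution_def real_distribution_axioms_def prob_space_return)
next
  case (Suc n) then show ?case
    by (simp add: real_distribution_convolution real_distribution_delta_digits)
qed

lemma char_moran_conv: "char (moran_conv p D n) t = (\<Prod>k=1..n. mask k (t / moran_scale k))"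
proof (induction n)
  case 0 then show ?case by (simp add: char_def integral_return)
next
  case (Suc n)
  then show ?case
    by (simp add: char_convolution real_distribution_moran_conv real_distribution_delta_digits
        char_delta_digits prod.nat_ivl_Suc')
qed

lemma norm_char_moran_conv_sq: "(cmod (char (moran_conv p D n) t))\<^sup>2 = prod_mask_sq n t"
  by (simp only: char_moran_conv prod_mask_sq_def mask_sq_def prod_norm[symmetric] prod_power_distrib)

lemma moran_conv_support: "AE x in moran_conv p D n. x \<in> {0..\<Sum>k=1..n. top_digit k / moran_scale k}"
proof (induction n)
  case 0 then show ?case by (simp only: moran_conv.simps, subst AE_return) auto
next
  case (Suc n)
  have "AE y in delta_set (scaled_digits (Suc n)). y \<in> scaled_digits (Suc n)"
    by (rule AE_delta_set) (simp add: scaled_digits_eq)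
  then have "AE y in delta_set (scaled_digits (Suc n)). y \<in> {0..top_digit (Suc n) / moran_scale (Suc n)}"
    using moran_scale_pos[of "Suc n"] top_digit_ge[of "Suc n"]
    by (auto simp: scaled_digits_eq[of "Suc n"] divide_right_mono elim!: eventually_mono)
  from AE_convolution_atLeastAtMost[OF real_distribution_moran_conv
      real_distribution_delta_digits Suc.IH this]
  show ?case unfolding moran_conv.simps(2) by (simp add: sum.nat_ivl_Suc')
qed

lemma sum_top_digit_div_moran_scale_le: "(\<Sum>k=1..n. top_digit k / moran_scale k) \<le> 4"
proof -
  have "(\<Sum>k=1..n. top_digit k / moran_scale k) \<le> (\<Sum>k=1..n. 8 * (1/3) ^ k)"
    by (intro sum_mono top_digit_div_moran_scale) simp
  also have "\<dots> \<le> 8 * ((1/3) ^ 1 / (1 - 1/3))"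
    unfolding sum_distrib_left[symmetric] by (intro mult_left_mono sum_gp_le) auto
  finally show ?thesis by simp
qed

lemma tight_moran_conv: "tight (moran_conv p D)"
  unfolding tight_def
proof (intro conjI allI impI)
  fix e :: real assume "e > 0"
  have "1 - e < measure (moran_conv p D n) {-1<..5}" for n
  proof -
    interpret real_distribution "moran_conv p D n" by (rule real_distribution_moran_conv)
    have "AE x in moran_conv p D n. x \<in> {-1<..5::real}"
      using moran_conv_support[of n]
      by eventually_elim (use sum_top_digit_div_moran_scale_le[of n] in auto)
    then have "prob {-1<..5::real} = 1" by (subst prob_eq_1) auto
    then show ?thesis using \<open>e > 0\<close> by simp
  qed
  then show "\<exists>a b. a < b \<and> (\<forall>n. 1 - e < measure (moran_conv p D n) {a<..b})"
    by (intro exI[of _ "-1::real"] exI[of _ "5::real"]) auto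
qed (rule real_distribution_moran_conv)

lemma convergent_char_moran_conv: "convergent (\<lambda>n. char (moran_conv p D n) t)"
proof -
  define f where "f i = mask (Suc i) (t / moran_scale (Suc i))" for i
  have bound: "norm (f i - 1) \<le> 8 * \<bar>t\<bar> * (1/3) ^ Suc i" for i
  proof -
    have "norm (f i - 1) \<le> top_digit (Suc i) * \<bar>t / moran_scale (Suc i)\<bar>"
      unfolding f_def by (rule norm_mask_minus_1) simp
    also have "\<dots> = top_digit (Suc i) / moran_scale (Suc i) * \<bar>t\<bar>"
      using moran_scale_pos[of "Suc i"] by (simp add: abs_divide)
    also have "\<dots> \<le> 8 * (1/3) ^ Suc i * \<bar>t\<bar>"
      using top_digit_div_moran_scale[of "Suc i"] by (intro mult_right_mono) auto
    finally show ?thesis by (simp add: mult_ac)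
  qed
  have "summable (\<lambda>i. 8 * \<bar>t\<bar> * (1/3::real) ^ Suc i)"
    by (intro summable_mult summable_Suc_iff[THEN iffD2] summable_geometric) simp
  then have "summable (\<lambda>i. norm (f i - 1))"
    by (rule summable_comparison_test'[where N=0]) (use bound in auto)
  then have "convergent_prod f"
    by (intro abs_convergent_prod_imp_convergent_prod summable_imp_abs_convergent_prod)
  then have "(\<lambda>n. \<Prod>i\<le>n. f i) \<longlonglongrightarrow> prodinf f" by (rule convergent_prod_LIMSEQ)
  moreover have "(\<Prod>i\<le>n. f i) = char (moran_conv p D (Suc n)) t" for n
    unfolding char_moran_conv f_def atMost_atLeast0 One_nat_def prod.shift_bounds_cl_Suc_ivl ..
  ultimately have "(\<lambda>n. char (moran_conv p D (Suc n)) t) \<longlonglongrightarrow> prodinf f"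
    by (simp del: moran_conv.simps)
  then show ?thesis
    unfolding convergent_def by (blast intro: LIMSEQ_imp_Suc)
qed

lemma cantor_moran_measure_exists: "\<exists>\<mu>. is_cantor_moran_measure p D \<mu>"
proof -
  obtain r M where r: "strict_mono r" and M: "real_distribution M"
    and wc: "weak_conv_m (moran_conv p D \<circ> id \<circ> r) M"
    using tight_imp_convergent_subsubsequence[OF tight_moran_conv, of id]
    by (auto simp: strict_mono_def)
  have "(\<lambda>n. char (moran_conv p D n) t) \<longlonglongrightarrow> char M t" for t
  proof -
    obtain L where L: "(\<lambda>n. char (moran_conv p D n) t) \<longlonglongrightarrow> L"
      using convergent_char_moran_conv[of t] by (auto simp: convergent_def)
    have "(\<lambda>n. char ((moran_conv p D \<circ> id \<circ> r) n) t) \<longlonglongrightarrow> char M t"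
      by (rule levy_continuity1[OF _ M wc]) (simp add: real_distribution_moran_conv)
    moreover have "(\<lambda>n. char ((moran_conv p D \<circ> id \<circ> r) n) t) \<longlonglongrightarrow> L"
      using LIMSEQ_subseq_LIMSEQ[OF L r] by (simp add: comp_def)
    ultimately show ?thesis using L LIMSEQ_unique by metis
  qed
  then have "weak_conv_m (moran_conv p D) M"
    by (intro levy_continuity real_distribution_moran_conv M)
  then show ?thesis using M
    by (intro exI[of _ M])
       (simp add: is_cantor_moran_measure_def real_distribution_def real_distribution_axioms_def)
qed

end

section \<open>Spectrality\<close>

definition moran_spectrum :: "real set" where
  "moran_spectrum = (\<Union>n. spectrum_stage n)"

lemma countable_moran_spectrum: "countable moran_spectrum"
proof (rule countable_subset)
  show "moran_spectrum \<subseteq> \<int>" unfolding moran_spectrum_def using spectrum_stage_Ints by blast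
qed (simp add: Ints_def)

lemma exp_fun_eq_iexp: "exp_fun l x = iexp (2 * pi * l * x)"
  by (simp add: exp_fun_def ac_simps)

lemma exp_fun_mult_cnj: "exp_fun a x * cnj (exp_fun b x) = iexp (2 * pi * (a - b) * x)"
  by (simp add: exp_fun_eq_iexp exp_cnj exp_add[symmetric] algebra_simps)

lemma norm_exp_fun [simp]: "cmod (exp_fun l x) = 1"
  by (simp add: exp_fun_eq_iexp)

lemma borel_measurable_exp_fun [measurable]: "exp_fun l \<in> borel_measurable borel"
  unfolding exp_fun_def by measurable

lemma integral_exp_sum_mult_cnj_exp_sum:
  assumes M: "real_distribution M" and "finite A" "finite B"
  shows "integrable M (\<lambda>x. (\<Sum>a\<in>A. \<alpha> a * exp_fun a x) * cnj (\<Sum>b\<in>B. \<beta> b * exp_fun b x))"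
    and "(\<integral>x. (\<Sum>a\<in>A. \<alpha> a * exp_fun a x) * cnj (\<Sum>b\<in>B. \<beta> b * exp_fun b x) \<partial>M)
           = (\<Sum>a\<in>A. \<Sum>b\<in>B. \<alpha> a * cnj (\<beta> b) * char M (2 * pi * (a - b)))"
proof -
  interpret real_distribution M by (rule M)
  have expand: "(\<Sum>a\<in>A. \<alpha> a * exp_fun a x) * cnj (\<Sum>b\<in>B. \<beta> b * exp_fun b x)
      = (\<Sum>a\<in>A. \<Sum>b\<in>B. \<alpha> a * cnj (\<beta> b) * iexp (2 * pi * (a - b) * x))" for x
    by (simp add: sum_product ac_simps) (simp add: exp_fun_mult_cnj algebra_simps)
  have int: "integrable M (\<lambda>x. c * iexp (t * x))" for c t
    by (intro integrable_mult_right integrable_iexp) auto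
  then show "integrable M (\<lambda>x. (\<Sum>a\<in>A. \<alpha> a * exp_fun a x) * cnj (\<Sum>b\<in>B. \<beta> b * exp_fun b x))"
    unfolding expand by (intro Bochner_Integration.integrable_sum)
  from expand int have "(\<integral>x. (\<Sum>a\<in>A. \<alpha> a * exp_fun a x) * cnj (\<Sum>b\<in>B. \<beta> b * exp_fun b x) \<partial>M)
      = (\<Sum>a\<in>A. \<Sum>b\<in>B. \<integral>x. \<alpha> a * cnj (\<beta> b) * iexp (2 * pi * (a - b) * x) \<partial>M)"
    by (simp only: Bochner_Integration.integral_sum Bochner_Integration.integrable_sum)
  then show "(\<integral>x. (\<Sum>a\<in>A. \<alpha> a * exp_fun a x) * cnj (\<Sum>b\<in>B. \<beta> b * exp_fun b x) \<partial>M)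
      = (\<Sum>a\<in>A. \<Sum>b\<in>B. \<alpha> a * cnj (\<beta> b) * char M (2 * pi * (a - b)))"
    by (simp only: integral_mult_right_zero char_def)
qed

lemma (in finite_measure) square_norm_integrable_imp_integrable:
  fixes f :: "'a \<Rightarrow> 'b::{banach, second_countable_topology}"
  assumes "integrable M (\<lambda>x. (norm (f x))\<^sup>2)" "f \<in> borel_measurable M"
  shows "integrable M f"
proof -
  have "integrable M (\<lambda>x. norm (f x))"
    by (rule square_integrable_imp_integrable[OF _ assms(1)]) (use assms(2) in measurable)
  then show ?thesis using assms(2) by (simp add: integrable_norm_iff)
qed

lemma norm_integral_mult_cnj_le:
  fixes f h :: "'a \<Rightarrow> complex"
  assumes [measurable]: "f \<in> borel_measurable M" "h \<in> borel_measurable M"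
    and "integrable M (\<lambda>x. (cmod (f x))\<^sup>2)" "integrable M (\<lambda>x. (cmod (h x))\<^sup>2)" and "t > 0"
  shows "cmod (\<integral>x. f x * cnj (h x) \<partial>M)
           \<le> t / 2 * (\<integral>x. (cmod (f x))\<^sup>2 \<partial>M) + (\<integral>x. (cmod (h x))\<^sup>2 \<partial>M) / (2 * t)"
proof -
  have AM_GM: "cmod (f x * cnj (h x)) \<le> t / 2 * (cmod (f x))\<^sup>2 + (cmod (h x))\<^sup>2 / (2 * t)" for x
  proof -
    have "0 \<le> (t * cmod (f x) - cmod (h x))\<^sup>2 / (2 * t)" using \<open>t > 0\<close> by simp
    then show ?thesis using \<open>t > 0\<close> by (simp add: norm_mult field_simps power2_eq_square)
  qed
  have int: "integrable M (\<lambda>x. t / 2 * (cmod (f x))\<^sup>2 + (cmod (h x))\<^sup>2 / (2 * t))"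
    using assms by simp
  have "cmod (\<integral>x. f x * cnj (h x) \<partial>M) \<le> (\<integral>x. cmod (f x * cnj (h x)) \<partial>M)"
    by (rule integral_norm_bound)
  also have "\<dots> \<le> (\<integral>x. t / 2 * (cmod (f x))\<^sup>2 + (cmod (h x))\<^sup>2 / (2 * t) \<partial>M)"
    using AM_GM by (intro integral_mono int Bochner_Integration.integrable_bound[OF int])
      (auto intro: order_trans[OF _ abs_ge_self])
  also have "\<dots> = t / 2 * (\<integral>x. (cmod (f x))\<^sup>2 \<partial>M) + (\<integral>x. (cmod (h x))\<^sup>2 \<partial>M) / (2 * t)"
    using assms by simp
  finally show ?thesis .
qed

lemma integral_mult_cnj_eq_0_if_L2_tendsto_0:
  fixes f :: "'a \<Rightarrow> complex" and h :: "nat \<Rightarrow> 'a \<Rightarrow> complex"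
  assumes [measurable]: "f \<in> borel_measurable M" "\<And>n. h n \<in> borel_measurable M"
    and f2: "integrable M (\<lambda>x. (cmod (f x))\<^sup>2)" and h2: "\<And>n. integrable M (\<lambda>x. (cmod (h n x))\<^sup>2)"
    and h2_tendsto: "(\<lambda>n. \<integral>x. (cmod (h n x))\<^sup>2 \<partial>M) \<longlonglongrightarrow> 0"
    and inner: "\<And>n. (\<integral>x. f x * cnj (h n x) \<partial>M) = v"
  shows "v = 0"
proof -
  define F where "F = (\<integral>x. (cmod (f x))\<^sup>2 \<partial>M)"
  have "cmod v \<le> 0 + e" if "e > 0" for e
  proof -
    define t where "t = 2 * e / (F + 1)"
    have "F \<ge> 0" unfolding F_def by simp
    then have t: "t > 0" "t / 2 * F \<le> e"
      using that by (auto simp: t_def field_simps)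
    have "cmod v \<le> t / 2 * F + (\<integral>x. (cmod (h n x))\<^sup>2 \<partial>M) / (2 * t)" for n
      unfolding inner[of n, symmetric] F_def by (rule norm_integral_mult_cnj_le) (use f2 h2 t in auto)
    moreover have "(\<lambda>n. t / 2 * F + (\<integral>x. (cmod (h n x))\<^sup>2 \<partial>M) / (2 * t)) \<longlonglongrightarrow> t / 2 * F + 0 / (2 * t)"
      using t by (intro tendsto_intros h2_tendsto) auto
    ultimately have "cmod v \<le> t / 2 * F"
      by (intro LIMSEQ_le_const) auto
    then show ?thesis using t by simp
  qed
  then show ?thesis
    using field_le_epsilon[of "cmod v" 0] by simp
qed

locale moran_3n_measure = moran_3n +
  fixes \<mu> :: "real measure"
  assumes cantor_moran: "is_cantor_moran_measure p D \<mu>"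
begin

lemma real_distribution_\<mu>: "real_distribution \<mu>"
  using cantor_moran
  by (simp add: is_cantor_moran_measure_def real_distribution_def real_distribution_axioms_def)

lemma sets_\<mu> [measurable_cong]: "sets \<mu> = sets borel"
  using cantor_moran by (simp add: is_cantor_moran_measure_def)

lemma char_\<mu>_zero: "char \<mu> 0 = 1"
  using real_distribution_\<mu> by (rule real_distribution.char_zero)

lemma char_\<mu>_uminus: "char \<mu> (- t) = cnj (char \<mu> t)"
proof -
  have "(\<lambda>x. iexp (- t * x)) = (\<lambda>x. cnj (iexp (t * x)))"
    by (simp add: exp_cnj)
  then show ?thesis unfolding char_def by (simp only: Bochner_Integration.integral_cnj)
qed

lemma prod_mask_sq_tendsto: "(\<lambda>n. prod_mask_sq n t) \<longlonglongrightarrow> (cmod (char \<mu> t))\<^sup>2"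
proof -
  have "(\<lambda>n. char (moran_conv p D n) t) \<longlonglongrightarrow> char \<mu> t"
    using cantor_moran real_distribution_\<mu>
    by (intro levy_continuity1 real_distribution_moran_conv) (auto simp: is_cantor_moran_measure_def)
  then show ?thesis
    unfolding norm_char_moran_conv_sq[symmetric] by (intro tendsto_intros)
qed

lemma norm_char_sq_le_prod_mask_sq: "(cmod (char \<mu> t))\<^sup>2 \<le> prod_mask_sq n t"
  by (rule decseq_ge[OF decseq_prod_mask_sq prod_mask_sq_tendsto])

lemma char_spectrum_diff:
  assumes "l \<in> moran_spectrum" "l' \<in> moran_spectrum" "l \<noteq> l'"
  shows "char \<mu> (2 * pi * (l - l')) = 0"
proof -
  obtain a b where "l \<in> spectrum_stage a" "l' \<in> spectrum_stage b"
    using assms unfolding moran_spectrum_def by auto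
  then have l: "l \<in> spectrum_stage (max a b)" "l' \<in> spectrum_stage (max a b)"
    using spectrum_stage_mono[of a "max a b"] spectrum_stage_mono[of b "max a b"] by auto
  have "eventually (\<lambda>m. prod_mask_sq m (2 * pi * (l - l')) = 0) sequentially"
    using prod_mask_sq_spectrum_diff[OF l assms(3)]
    by (auto simp: eventually_sequentially intro!: exI[of _ "max a b"])
  then have "(\<lambda>m. prod_mask_sq m (2 * pi * (l - l'))) \<longlonglongrightarrow> 0"
    by (rule tendsto_eventually)
  then show ?thesis
    using prod_mask_sq_tendsto LIMSEQ_unique by fastforce
qed

lemma norm_char_sq_ge_prod_mask_sq:
  assumes "n \<ge> 3" "n \<ge> 3 * \<bar>s\<bar> / pi" "l \<in> spectrum_stage n"
  shows "prod_mask_sq n (s - 2 * pi * l) / 1458 \<le> (cmod (char \<mu> (s - 2 * pi * l)))\<^sup>2"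
proof (rule tendsto_lowerbound[OF prod_mask_sq_tendsto])
  have "pi * real n \<le> pi * moran_scale n"
    using moran_scale_ge[of n] by (simp add: mult_left_mono)
  moreover have "3 * \<bar>s\<bar> \<le> pi * real n"
    using assms(2) pi_gt_zero by (simp add: field_simps)
  ultimately have "\<bar>s\<bar> \<le> pi / 3 * moran_scale n"
    by linarith
  have "\<bar>s - 2 * pi * l\<bar> \<le> \<bar>s\<bar> + 2 * pi * \<bar>l\<bar>"
    using abs_triangle_ineq4[of s "2 * pi * l"] by (simp add: abs_mult)
  also have "\<dots> \<le> pi / 3 * moran_scale n + 2 * pi * (moran_scale n / 2)"
    using \<open>\<bar>s\<bar> \<le> _\<close> spectrum_stage_abs_le[OF assms(3)] by (intro add_mono mult_left_mono) auto
  finally have "\<bar>s - 2 * pi * l\<bar> \<le> 4 * pi / 3 * moran_scale n"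
    by (simp add: field_simps)
  then show "\<forall>\<^sub>F m in sequentially. prod_mask_sq n (s - 2 * pi * l) / 1458 \<le> prod_mask_sq m (s - 2 * pi * l)"
    using prod_mask_sq_tail_ge[OF assms(1)] by (auto simp: eventually_sequentially)
qed simp

lemma sum_norm_char_sq_tendsto_1:
  "(\<lambda>n. \<Sum>l\<in>spectrum_stage n. (cmod (char \<mu> (s - 2 * pi * l)))\<^sup>2) \<longlonglongrightarrow> 1"
proof (rule nested_sums_tendsto_1[where A="\<lambda>n l. prod_mask_sq n (s - 2 * pi * l)" and \<delta>="1/1458"
      and n\<^sub>0="max 3 (nat \<lceil>3 * \<bar>s\<bar> / pi\<rceil>)"])
  show "\<And>n l. max 3 (nat \<lceil>3 * \<bar>s\<bar> / pi\<rceil>) \<le> n \<Longrightarrow> l \<in> spectrum_stage n \<Longrightarrow>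
      1/1458 * prod_mask_sq n (s - 2 * pi * l) \<le> (cmod (char \<mu> (s - 2 * pi * l)))\<^sup>2"
    using norm_char_sq_ge_prod_mask_sq by (simp add: nat_le_iff ceiling_le_iff)
qed (use finite_spectrum_stage spectrum_stage_mono sum_prod_mask_sq_spectrum_stage prod_mask_sq_tendsto
      norm_char_sq_le_prod_mask_sq in auto)

lemma norm_exp_fun_minus_projection_sq:
  fixes \<xi> :: real
  assumes L: "finite L" "L \<subseteq> moran_spectrum"
  defines "c l \<equiv> char \<mu> (2 * pi * (\<xi> - l))"
  shows "(\<integral>x. (cmod (exp_fun \<xi> x - (\<Sum>l\<in>L. c l * exp_fun l x)))\<^sup>2 \<partial>\<mu>) = 1 - (\<Sum>l\<in>L. (cmod (c l))\<^sup>2)"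
proof -
  define e S where "e x = (\<Sum>a\<in>{\<xi>}. 1 * exp_fun a x)" and "S x = (\<Sum>l\<in>L. c l * exp_fun l x)" for x
  note int = integral_exp_sum_mult_cnj_exp_sum[OF real_distribution_\<mu>]
  have integrable: "integrable \<mu> (\<lambda>x. e x * cnj (e x))" "integrable \<mu> (\<lambda>x. e x * cnj (S x))"
    "integrable \<mu> (\<lambda>x. S x * cnj (e x))" "integrable \<mu> (\<lambda>x. S x * cnj (S x))"
    unfolding e_def S_def by (intro int(1) L(1) finite.intros)+
  have "(\<integral>x. e x * cnj (e x) \<partial>\<mu>) = 1"
    unfolding e_def by (subst int(2)) (simp_all add: char_\<mu>_zero)
  moreover have "(\<integral>x. e x * cnj (S x) \<partial>\<mu>) = (\<Sum>l\<in>L. c l * cnj (c l))"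
    unfolding e_def S_def using L(1) by (subst int(2)) (simp_all add: c_def mult.commute)
  moreover have "(\<integral>x. S x * cnj (e x) \<partial>\<mu>) = (\<Sum>l\<in>L. c l * cnj (c l))"
    unfolding e_def S_def using L(1)
    by (subst int(2)) (simp_all add: c_def char_\<mu>_uminus[symmetric] algebra_simps)
  moreover have "(\<integral>x. S x * cnj (S x) \<partial>\<mu>) = (\<Sum>l\<in>L. c l * cnj (c l))"
  proof -
    have "(\<Sum>l'\<in>L. c l * cnj (c l') * char \<mu> (2 * pi * (l - l'))) = c l * cnj (c l)" if "l \<in> L" for l
    proof -
      have "(\<Sum>l'\<in>L. c l * cnj (c l') * char \<mu> (2 * pi * (l - l')))
          = (\<Sum>l'\<in>L. if l' = l then c l * cnj (c l) else 0)"
        using char_spectrum_diff that L(2) char_\<mu>_zero by (intro sum.cong) auto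
      then show ?thesis using L(1) that by simp
    qed
    then show ?thesis unfolding S_def using L(1) by (subst int(2)) simp_all
  qed
  moreover have "complex_of_real ((cmod (e x - S x))\<^sup>2)
      = e x * cnj (e x) - e x * cnj (S x) - S x * cnj (e x) + S x * cnj (S x)" for x
    by (simp only: complex_norm_square) (simp add: algebra_simps)
  then have "complex_of_real (\<integral>x. (cmod (e x - S x))\<^sup>2 \<partial>\<mu>)
      = (\<integral>x. e x * cnj (e x) - e x * cnj (S x) - S x * cnj (e x) + S x * cnj (S x) \<partial>\<mu>)"
    by (simp only: integral_complex_of_real[symmetric])
  ultimately have "complex_of_real (\<integral>x. (cmod (e x - S x))\<^sup>2 \<partial>\<mu>) = 1 - (\<Sum>l\<in>L. c l * cnj (c l))"
    using integrable by simp
  also have "\<dots> = complex_of_real (1 - (\<Sum>l\<in>L. (cmod (c l))\<^sup>2))"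
    by (simp only: of_real_diff of_real_1 of_real_sum complex_norm_square)
  finally have "(\<integral>x. (cmod (e x - S x))\<^sup>2 \<partial>\<mu>) = 1 - (\<Sum>l\<in>L. (cmod (c l))\<^sup>2)"
    by (simp only: of_real_eq_iff)
  then show ?thesis by (simp add: e_def S_def)
qed

lemma integrable_norm_exp_fun_minus_sum_sq:
  assumes "finite L"
  shows "integrable \<mu> (\<lambda>x. (cmod (exp_fun \<xi> x - (\<Sum>l\<in>L. c l * exp_fun l x)))\<^sup>2)"
proof -
  interpret real_distribution \<mu> by (rule real_distribution_\<mu>)
  have "cmod (exp_fun \<xi> x - (\<Sum>l\<in>L. c l * exp_fun l x)) \<le> 1 + (\<Sum>l\<in>L. cmod (c l))" for x
  proof -
    have "cmod (exp_fun \<xi> x - (\<Sum>l\<in>L. c l * exp_fun l x)) \<le> cmod (exp_fun \<xi> x) + cmod (\<Sum>l\<in>L. c l * exp_fun l x)"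
      by (rule norm_triangle_ineq4)
    also have "cmod (\<Sum>l\<in>L. c l * exp_fun l x) \<le> (\<Sum>l\<in>L. cmod (c l * exp_fun l x))"
      by (rule norm_sum)
    finally show ?thesis by (simp add: norm_mult)
  qed
  then show ?thesis
    by (intro integrable_const_bound[where B="(1 + (\<Sum>l\<in>L. cmod (c l)))\<^sup>2"]) (auto intro!: power_mono)
qed

lemma norm_exp_fun_minus_projection_sq_tendsto_0:
  "(\<lambda>n. \<integral>x. (cmod (exp_fun \<xi> x - (\<Sum>l\<in>spectrum_stage n. char \<mu> (2 * pi * (\<xi> - l)) * exp_fun l x)))\<^sup>2 \<partial>\<mu>)
     \<longlonglongrightarrow> 0"
proof -
  have "spectrum_stage n \<subseteq> moran_spectrum" for n
    by (auto simp: moran_spectrum_def)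
  then have "(\<integral>x. (cmod (exp_fun \<xi> x - (\<Sum>l\<in>spectrum_stage n. char \<mu> (2 * pi * (\<xi> - l)) * exp_fun l x)))\<^sup>2 \<partial>\<mu>)
      = 1 - (\<Sum>l\<in>spectrum_stage n. (cmod (char \<mu> (2 * pi * (\<xi> - l))))\<^sup>2)" for n
    by (intro norm_exp_fun_minus_projection_sq finite_spectrum_stage)
  moreover have "(\<lambda>n. \<Sum>l\<in>spectrum_stage n. (cmod (char \<mu> (2 * pi * (\<xi> - l))))\<^sup>2) \<longlonglongrightarrow> 1"
    using sum_norm_char_sq_tendsto_1[of "2 * pi * \<xi>"] by (simp add: right_diff_distrib)
  then have "(\<lambda>n. 1 - (\<Sum>l\<in>spectrum_stage n. (cmod (char \<mu> (2 * pi * (\<xi> - l))))\<^sup>2)) \<longlonglongrightarrow> 1 - 1"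
    by (intro tendsto_intros)
  ultimately show ?thesis by simp
qed

text \<open>\<open>f\<close> is orthogonal to the projection of \<open>exp_fun \<xi>\<close> onto the exponentials of \<open>spectrum_stage n\<close>,
  and the remainder \<open>h n\<close> of that projection tends to 0 in \<open>L\<^sup>2\<close>.\<close>

lemma inner_exp_fun_eq_0:
  assumes [measurable]: "f \<in> borel_measurable \<mu>" and f2: "integrable \<mu> (\<lambda>x. (cmod (f x))\<^sup>2)"
    and orth: "\<forall>l\<in>moran_spectrum. (\<integral>x. f x * cnj (exp_fun l x) \<partial>\<mu>) = 0"
  shows "(\<integral>x. f x * cnj (exp_fun \<xi> x) \<partial>\<mu>) = 0"
proof -
  interpret real_distribution \<mu> by (rule real_distribution_\<mu>)
  have "integrable \<mu> f"
    using f2 by (rule square_norm_integrable_imp_integrable) measurable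
  then have int_f_exp: "integrable \<mu> (\<lambda>x. f x * cnj (exp_fun l x))" for l
    by (rule Bochner_Integration.integrable_bound) (auto simp: norm_mult)
  define c where "c l = char \<mu> (2 * pi * (\<xi> - l))" for l
  define h where "h n x = exp_fun \<xi> x - (\<Sum>l\<in>spectrum_stage n. c l * exp_fun l x)" for n x
  have [measurable]: "h n \<in> borel_measurable \<mu>" for n
    unfolding h_def by measurable
  have "(\<integral>x. f x * cnj (h n x) \<partial>\<mu>) = (\<integral>x. f x * cnj (exp_fun \<xi> x) \<partial>\<mu>)" for n
  proof -
    have "(\<lambda>x. f x * cnj (h n x))
        = (\<lambda>x. f x * cnj (exp_fun \<xi> x) - (\<Sum>l\<in>spectrum_stage n. cnj (c l) * (f x * cnj (exp_fun l x))))"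
      unfolding h_def by (auto simp: algebra_simps sum_distrib_left)
    moreover have "l \<in> spectrum_stage n \<Longrightarrow> (\<integral>x. f x * cnj (exp_fun l x) \<partial>\<mu>) = 0" for l
      using orth unfolding moran_spectrum_def by blast
    ultimately show ?thesis using int_f_exp by simp
  qed
  moreover have "(\<lambda>n. \<integral>x. (cmod (h n x))\<^sup>2 \<partial>\<mu>) \<longlonglongrightarrow> 0"
    unfolding h_def c_def by (rule norm_exp_fun_minus_projection_sq_tendsto_0)
  ultimately show ?thesis
    using integral_mult_cnj_eq_0_if_L2_tendsto_0[of f \<mu> h] f2
      integrable_norm_exp_fun_minus_sum_sq[OF finite_spectrum_stage] by (simp add: h_def)
qed

lemma moran_spectrum_complete:
  assumes "f \<in> borel_measurable \<mu>" "integrable \<mu> (\<lambda>x. (cmod (f x))\<^sup>2)"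
    and "\<forall>l\<in>moran_spectrum. (\<integral>x. f x * cnj (exp_fun l x) \<partial>\<mu>) = 0"
  shows "AE x in \<mu>. f x = 0"
proof (rule Fourier_eq_0_imp_AE_zero[OF real_distribution_\<mu>])
  interpret real_distribution \<mu> by (rule real_distribution_\<mu>)
  show "integrable \<mu> f"
    by (rule square_norm_integrable_imp_integrable[OF assms(2,1)])
  fix t
  have "iexp (t * x) = cnj (exp_fun (- (t / (2 * pi))) x)" for x
    by (simp add: exp_fun_eq_iexp exp_cnj)
  then show "(\<integral>x. f x * iexp (t * x) \<partial>\<mu>) = 0"
    using inner_exp_fun_eq_0[OF assms] by simp
qed

lemma spectral_measure: "spectral_measure \<mu>"
  unfolding spectral_measure_def exp_orthogonal_basis_def
proof (intro conjI exI[of _ moran_spectrum] ballI impI allI)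
  show "prob_space \<mu>" using real_distribution_\<mu> by (simp add: real_distribution_def)
  show "countable moran_spectrum" by (rule countable_moran_spectrum)
  show "(\<integral>x. exp_fun l x * cnj (exp_fun l' x) \<partial>\<mu>) = 0"
    if "l \<in> moran_spectrum" "l' \<in> moran_spectrum" "l \<noteq> l'" for l l'
    using char_spectrum_diff[OF that] by (simp add: exp_fun_mult_cnj char_def)
qed (use moran_spectrum_complete in blast)

end

theorem mainTheorem5:
  fixes p :: "nat \<Rightarrow> nat" and D :: "nat \<Rightarrow> int set"
  assumes "\<And>n. n \<ge> 1 \<Longrightarrow> p n = 3 * n"
      and "\<And>n. n \<ge> 1 \<Longrightarrow> D n = {0, 2, 3 * int n ^ 2 + 1}"
  shows "(\<exists>\<mu>. is_cantor_moran_measure p D \<mu>) \<and>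
         (\<forall>\<mu>. is_cantor_moran_measure p D \<mu> \<longrightarrow> spectral_measure \<mu>)"
proof -
  interpret moran_3n p D
    using assms by unfold_locales
  show ?thesis
  proof (intro conjI allI impI)
    show "\<exists>\<mu>. is_cantor_moran_measure p D \<mu>" by (rule cantor_moran_measure_exists)
    fix \<mu> assume "is_cantor_moran_measure p D \<mu>"
    then interpret moran_3n_measure p D \<mu> by unfold_locales
    show "spectral_measure \<mu>" by (rule spectral_measure)
  qed
qed

end
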